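(* Consider the multi-resource General Lotto game with the weakest-link winning rule $W_{\mathrm{WL}}$, budgets $\boldsymbol X=(X_1,\dots,X_T)$ with $X_t>0$ for all $t\in\mathcal T$ and $\boldsymbol Y=(Y_1,\dots,Y_T)\in\mathbb R_{\ge 0}^T$, and contest values $\boldsymbol v$. Let $\alpha=\alpha(\boldsymbol X,\boldsymbol Y)=\sum_{t\in\mathcal T} Y_t/X_t$. Then the game has an equilibrium, and in every equilibrium the payoff to player $\mathcal X$ is $L(\alpha)$ and the payoff to player $\mathcal Y$ is $1-L(\alpha)$. Moreover, an equilibrium $(F^*_{\mathcal X},F^*_{\mathcal Y})\in\mathbb F(\boldsymbol X)\times\mathbb F(\boldsymbol Y)$ is given by any strategies (e.g. the independent product over contests) whose $c$-marginals are, for all $c\in\mathcal C$ and $\boldsymbol u\in\mathbb R^T_{\ge0}$: if $\alpha\le 1$, $$F^*_{\mathcal X,c}(\boldsymbol u)=\min_{t\in\mathcal T}\min\Big\{\frac{u_t}{2v_cX_t},1\Big\},\qquad F^*_{\mathcal Y,c}(\boldsymbol u)=1-\alpha+\alpha\sum_{t\in\mathcal T}\frac{Y_t/X_t}{\alpha}\min\Big\{\frac{u_t}{2v_cX_t},1\Big\}$$ (when $\alpha=0$ the second expression is read as $F^*_{\mathcal Y,c}\equiv 1$); if $\alpha>1$, $$F^*_{\mathcal X,c}(\boldsymbol u)=1-\frac1\alpha+\frac1\alpha\min_{t\in\mathcal T}\min\Big\{\frac{u_t}{2v_cX_t\alpha},1\Big\},\qquad F^*_{\mathcal Y,c}(\boldsymbol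 u)=\sum_{t\in\mathcal T}\frac{Y_t/X_t}{\alpha}\min\Big\{\frac{u_t}{2v_cX_t\alpha},1\Big\}.$$
   Context: Contests $\mathcal C=\{1,\dots,C\}$ ($C\ge1$) have values $v_c>0$ with $\sum_{c}v_c=1$. Resource types $\mathcal T=\{1,\dots,T\}$, $T\ge1$. A pure allocation of player $\mathcal X$ is $\mathbf x=(\boldsymbol x_1,\dots,\boldsymbol x_C)\in\mathbb R_{\ge0}^{CT}$ with $\boldsymbol x_c=(x_{c,1},\dots,x_{c,T})$, where $x_{c,t}$ is the amount of type-$t$ resource sent to contest $c$; similarly $\mathbf y$ for player $\mathcal Y$. The strategy set $\mathbb F(\boldsymbol X)$ is the set of probability distributions $F$ on $\mathbb R_{\ge0}^{CT}$ with $\mathbb E_{\mathbf x\sim F}[\sum_{c\in\mathcal C}x_{c,t}]\le X_t$ for every $t\in\mathcal T$ (budgets hold only in expectation); $\mathbb F(\boldsymbol Y)$ likewise. The weakest-link rule is $W_{\mathrm{WL}}(\boldsymbol x,\boldsymbol y)=1$ if $x_t\ge y_t$ for all $t\in\mathcal T$ and $0$ otherwise (so $\mathcal Y$ wins a contest iff $y_t>x_t$ for some $t$). For $(F_{\mathcal X},F_{\mathcal Y})$, $\pi_{\mathcal X}(F_{\mathcal X},F_{\mathcal Y})=\mathbb E_{\mathbf x\sim F_{\mathcal X},\mathbf y\sim F_{\mathcal Y}}[\sum_c v_cW_{\mathrm{WL}}(\boldsymbol x_c,\boldsymbol y_c)]$ with $\mathbf x,\mathbf y$ independent, and $\pi_{\mathcal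 Y}=1-\pi_{\mathcal X}$. An equilibrium is $(F^*_{\mathcal X},F^*_{\mathcal Y})$ with $\pi_{\mathcal X}(F_{\mathcal X},F^*_{\mathcal Y})\le\pi_{\mathcal X}(F^*_{\mathcal X},F^*_{\mathcal Y})\le\pi_{\mathcal X}(F^*_{\mathcal X},F_{\mathcal Y})$ for all $F_{\mathcal X}\in\mathbb F(\boldsymbol X)$, $F_{\mathcal Y}\in\mathbb F(\boldsymbol Y)$. The $c$-marginal of $F$ is $F_c(\boldsymbol u)=\mathbb P_{\mathbf x\sim F}[x_{c,t}\le u_t\ \forall t\in\mathcal T]$ for $\boldsymbol u\in\mathbb R^T_{\ge0}$. The function $L:[0,\infty)\to(0,1]$ is $L(\alpha)=1-\alpha/2$ if $\alpha\le1$ and $L(\alpha)=1/(2\alpha)$ if $\alpha>1$. *)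

theory Defs
  imports "HOL-Probability.Probability"
begin

text \<open>Pure allocations are vectors x :: real^'t^'c, where x$c$t is the amount of
  type-t resource sent to contest c. Contests and resource types are finite types.\<close>

definition L :: "real \<Rightarrow> real" where
  "L \<alpha> = (if \<alpha> \<le> 1 then 1 - \<alpha> / 2 else 1 / (2 * \<alpha>))"

definition W_WL :: "real^'t::finite \<Rightarrow> real^'t \<Rightarrow> real" where
  "W_WL a b = (if \<forall>t. b$t \<le> a$t then 1 else 0)"

definition strategies :: "('t::finite \<Rightarrow> real) \<Rightarrow> (real^'t^'c::finite) measure set" where
  "strategies B = {M. prob_space M \<and> sets M = sets borel \<and>
      (AE x in M. \<forall>c t. 0 \<le> x$c$t) \<and>
      (\<forall>t. (\<integral>\<^sup>+ x. ennreal (\<Sum>c\<in>UNIV. x$c$t) \<partial>M) \<le> ennreal (B t))}"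

definition payoff_X :: "('c::finite \<Rightarrow> real) \<Rightarrow> (real^'t::finite^'c) measure
    \<Rightarrow> (real^'t^'c) measure \<Rightarrow> real" where
  "payoff_X v F G = (\<integral> z. (\<Sum>c\<in>UNIV. v c * W_WL (fst z $ c) (snd z $ c)) \<partial>(F \<Otimes>\<^sub>M G))"

definition payoff_Y :: "('c::finite \<Rightarrow> real) \<Rightarrow> (real^'t::finite^'c) measure
    \<Rightarrow> (real^'t^'c) measure \<Rightarrow> real" where
  "payoff_Y v F G = 1 - payoff_X v F G"

definition equilibrium :: "('c::finite \<Rightarrow> real) \<Rightarrow> ('t::finite \<Rightarrow> real) \<Rightarrow> ('t \<Rightarrow> real)
    \<Rightarrow> (real^'t^'c) measure \<Rightarrow> (real^'t^'c) measure \<Rightarrow> bool" where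
  "equilibrium v X Y F G \<longleftrightarrow> F \<in> strategies X \<and> G \<in> strategies Y \<and>
     (\<forall>F'\<in>strategies X. payoff_X v F' G \<le> payoff_X v F G) \<and>
     (\<forall>G'\<in>strategies Y. payoff_X v F G \<le> payoff_X v F G')"

definition marginal :: "(real^'t::finite^'c::finite) measure \<Rightarrow> 'c \<Rightarrow> real^'t \<Rightarrow> real" where
  "marginal F c u = measure F {x. \<forall>t. x$c$t \<le> u$t}"

definition alpha :: "('t::finite \<Rightarrow> real) \<Rightarrow> ('t \<Rightarrow> real) \<Rightarrow> real" where
  "alpha X Y = (\<Sum>t\<in>UNIV. Y t / X t)"

definition FX_star :: "('c::finite \<Rightarrow> real) \<Rightarrow> ('t::finite \<Rightarrow> real) \<Rightarrow> ('t \<Rightarrow> real)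
    \<Rightarrow> 'c \<Rightarrow> real^'t \<Rightarrow> real" where
  "FX_star v X Y c u = (let a = alpha X Y in
     if a \<le> 1 then Min ((\<lambda>t. min (u$t / (2 * v c * X t)) 1) ` UNIV)
     else 1 - 1 / a + (1 / a) * Min ((\<lambda>t. min (u$t / (2 * v c * X t * a)) 1) ` UNIV))"

definition FY_star :: "('c::finite \<Rightarrow> real) \<Rightarrow> ('t::finite \<Rightarrow> real) \<Rightarrow> ('t \<Rightarrow> real)
    \<Rightarrow> 'c \<Rightarrow> real^'t \<Rightarrow> real" where
  "FY_star v X Y c u = (let a = alpha X Y in
     if a = 0 then 1
     else if a \<le> 1 then 1 - a + a * (\<Sum>t\<in>UNIV. (Y t / X t) / a * min (u$t / (2 * v c * X t)) 1)
     else (\<Sum>t\<in>UNIV. (Y t / X t) / a * min (u$t / (2 * v c * X t * a)) 1))"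

end

theory Submission
  imports Defs
begin

text \<open>
  Put \<open>\<beta> = max 1 \<alpha>\<close> and \<open>k c t = 2 v\<^sub>c X\<^sub>t \<beta>\<close>; this covers both regimes of the theorem at once.
  The candidate marginals are those of simple mixtures: with probability \<open>1/\<beta>\<close> player X sends
  \<open>s k c t\<close> of every type to every contest, with \<open>s\<close> uniform on [0,1], and nothing otherwise; with
  probability \<open>Y\<^sub>t/(X\<^sub>t \<beta>)\<close> player Y does the same with type \<open>t\<close> only.
  Against X's marginals an allocation \<open>y\<close> loses contest \<open>c\<close> with probability at least
  \<open>(1 - \<Sum>\<^sub>t y c t / k c t) / \<beta>\<close>, a bound that is affine in \<open>y\<close>; taking expectations and using Y's budget,
  X secures \<open>1/\<beta> - \<alpha>/(2\<beta>\<^sup>2) = L \<alpha>\<close> against every strategy of Y. Dually Y's marginal CDF is bounded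
  by the affine function \<open>1 - \<alpha>/\<beta> + \<Sum>\<^sub>t Y\<^sub>t u\<^sub>t /(X\<^sub>t \<beta> k c t)\<close>, so Y holds X to \<open>L \<alpha>\<close>.
  Two strategies guaranteeing the same value from both sides form an equilibrium, and by the usual
  saddle-point argument every equilibrium has that value.
\<close>

definition uniform01 :: "real measure" where
  "uniform01 = uniform_measure lborel {0..1}"

lemma prob_space_uniform01: "prob_space uniform01"
  unfolding uniform01_def by (rule prob_space_uniform_measure) auto

lemma sets_uniform01[simp, measurable_cong]: "sets uniform01 = sets borel"
  unfolding uniform01_def by simp

lemma space_uniform01[simp]: "space uniform01 = UNIV"
  unfolding uniform01_def by simp

lemma emeasure_uniform01:
  assumes [measurable]: "B \<in> sets borel"
  shows "emeasure uniform01 B = emeasure lborel ({0..1} \<inter> B)"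
  unfolding uniform01_def by (subst emeasure_uniform_measure) (auto simp: divide_ennreal_def)

lemma measure_uniform01_eq:
  assumes "B \<in> sets borel" "{0..1} \<inter> B = {0..m}" "0 \<le> m"
  shows "measure uniform01 B = m"
  using assms by (simp add: measure_def emeasure_uniform01)

lemma measure_uniform01_ge:
  assumes "0 \<le> a"
  shows "1 - a \<le> measure uniform01 {s. a \<le> s}"
proof (cases "a \<le> 1")
  case True
  have "{0..1} \<inter> {s. a \<le> s} = {a..1}" using assms by auto
  then have "emeasure uniform01 {s. a \<le> s} = ennreal (1 - a)"
    using assms True by (subst emeasure_uniform01) auto
  then show ?thesis using True by (simp add: measure_def)
next
  case False
  then show ?thesis by (simp add: measure_nonneg order_trans[of _ 0])
qed

lemma nn_integral_uniform01_scaled_abs: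
  assumes "0 \<le> K"
  shows "(\<integral>\<^sup>+s. ennreal (K * \<bar>s\<bar>) \<partial>uniform01) = ennreal (K / 2)"
proof -
  have "((\<lambda>x. x) has_integral ((\<lambda>x. x\<^sup>2/2) 1 - (\<lambda>x. x\<^sup>2/2) 0)) {0..1::real}"
    by (rule fundamental_theorem_of_calculus)
      (auto intro!: derivative_eq_intros simp: has_real_derivative_iff_has_vector_derivative[symmetric])
  then have half_int: "((\<lambda>x. x) has_integral 1/2) {0..1::real}" by simp
  have "(\<integral>\<^sup>+x. ennreal x * indicator {0..1} x \<partial>lborel) = ennreal (1/2)"
    by (rule nn_integral_has_integral_lebesgue'[OF _ half_int]) auto
  moreover have "(\<integral>\<^sup>+s. ennreal \<bar>s\<bar> \<partial>uniform01) = (\<integral>\<^sup>+x. ennreal x * indicator {0..1} x \<partial>lborel)"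
    unfolding uniform01_def
    by (subst nn_integral_uniform_measure)
      (auto simp: divide_ennreal_def intro!: nn_integral_cong split: split_indicator)
  ultimately have half: "(\<integral>\<^sup>+s. ennreal \<bar>s\<bar> \<partial>uniform01) = ennreal (1/2)" by simp
  have "(\<integral>\<^sup>+s. ennreal (K * \<bar>s\<bar>) \<partial>uniform01) = ennreal K * (\<integral>\<^sup>+s. ennreal \<bar>s\<bar> \<partial>uniform01)"
    using assms by (subst nn_integral_cmult[symmetric]) (auto simp: ennreal_mult)
  also have "\<dots> = ennreal (K / 2)"
    unfolding half using ennreal_mult[OF assms, of "1/2"] by simp
  finally show ?thesis .
qed

section \<open>Finite mixtures of pushforwards of the uniform distribution\<close>

definition mix :: "'a::finite pmf \<Rightarrow> ('a \<Rightarrow> real \<Rightarrow> 'b::topological_space) \<Rightarrow> 'b measure" where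
  "mix P g = distr (measure_pmf P \<Otimes>\<^sub>M uniform01) borel (\<lambda>z. g (fst z) (snd z))"

lemma measurable_mix_kernel:
  fixes g :: "'a::finite \<Rightarrow> real \<Rightarrow> 'b::topological_space"
  assumes "\<And>a. g a \<in> borel_measurable borel"
  shows "(\<lambda>z. g (fst z) (snd z)) \<in> measurable (measure_pmf P \<Otimes>\<^sub>M uniform01) borel"
proof -
  have "sets (measure_pmf P \<Otimes>\<^sub>M uniform01) = sets (count_space UNIV \<Otimes>\<^sub>M borel)"
    by (intro sets_pair_measure_cong) auto
  moreover have "(\<lambda>z. g (fst z) (snd z)) \<in> measurable (count_space UNIV \<Otimes>\<^sub>M borel) borel"
    by (rule measurable_pair_measure_countable1) (auto intro: assms intro!: countable_finite)
  ultimately show ?thesis using measurable_cong_sets by blast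
qed

lemma prob_space_mix:
  assumes "\<And>a. g a \<in> borel_measurable borel"
  shows "prob_space (mix P g)"
  unfolding mix_def
  by (rule prob_space.prob_space_distr[OF prob_space_pair[OF prob_space_measure_pmf prob_space_uniform01]
        measurable_mix_kernel[OF assms]])

lemma sets_mix[simp]: "sets (mix P g) = sets borel"
  unfolding mix_def by simp

lemma nn_integral_mix:
  assumes g: "\<And>a. g a \<in> borel_measurable borel" and [measurable]: "f \<in> borel_measurable borel"
  shows "(\<integral>\<^sup>+x. f x \<partial>mix P g) = (\<Sum>a\<in>UNIV. ennreal (pmf P a) * (\<integral>\<^sup>+s. f (g a s) \<partial>uniform01))"
proof -
  interpret U: prob_space uniform01 by (rule prob_space_uniform01)
  note m = measurable_mix_kernel[OF g, where P=P]
  have "(\<integral>\<^sup>+x. f x \<partial>mix P g) = (\<integral>\<^sup>+z. f (g (fst z) (snd z)) \<partial>(measure_pmf P \<Otimes>\<^sub>M uniform01))"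
    unfolding mix_def by (rule nn_integral_distr[OF m]) simp
  also have "\<dots> = (\<integral>\<^sup>+a. \<integral>\<^sup>+s. f (g a s) \<partial>uniform01 \<partial>measure_pmf P)"
    by (subst U.nn_integral_fst[symmetric]) (auto intro: measurable_compose[OF m])
  also have "\<dots> = (\<Sum>a\<in>UNIV. ennreal (pmf P a) * (\<integral>\<^sup>+s. f (g a s) \<partial>uniform01))"
    by (simp add: nn_integral_measure_pmf nn_integral_count_space_finite)
  finally show ?thesis .
qed

lemma measure_mix:
  assumes g: "\<And>a. g a \<in> borel_measurable borel" and A[measurable]: "A \<in> sets borel"
  shows "measure (mix P g) A = (\<Sum>a\<in>UNIV. pmf P a * measure uniform01 {s. g a s \<in> A})"
proof -
  interpret U: prob_space uniform01 by (rule prob_space_uniform01)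
  have "emeasure (mix P g) A = (\<integral>\<^sup>+x. indicator A x \<partial>mix P g)"
    by (simp add: nn_integral_indicator)
  also have "\<dots> = (\<Sum>a\<in>UNIV. ennreal (pmf P a) * (\<integral>\<^sup>+s. indicator {s. g a s \<in> A} s \<partial>uniform01))"
    unfolding nn_integral_mix[OF g borel_measurable_indicator[OF A]]
    by (simp add: indicator_def)
  also have "\<dots> = ennreal (\<Sum>a\<in>UNIV. pmf P a * measure uniform01 {s. g a s \<in> A})"
    using g by (simp add: U.emeasure_eq_measure ennreal_mult'[symmetric] sum_nonneg)
  finally show ?thesis
    by (simp add: measure_def sum_nonneg)
qed

lemma sum_UNIV_option:
  fixes h :: "'a::finite option \<Rightarrow> 'b::comm_monoid_add"
  shows "(\<Sum>q\<in>UNIV. h q) = h None + (\<Sum>t\<in>UNIV. h (Some t))"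
  by (simp add: UNIV_option_conv sum.reindex)

section \<open>Payoffs as expected winning probabilities\<close>

lemma borel_measurable_vec_nth[measurable]:
  "(\<lambda>x::'a::real_normed_vector^'n. x $ i) \<in> borel_measurable borel"
  by (intro borel_measurable_continuous_onI continuous_on_component continuous_on_id)

lemma integral_sum_weighted_indicator:
  fixes A :: "'c::finite \<Rightarrow> 'a set"
  assumes "prob_space M" "\<And>c. A c \<in> sets M"
  shows "(\<integral>x. (\<Sum>c\<in>UNIV. w c * indicator (A c) x) \<partial>M) = (\<Sum>c\<in>UNIV. w c * measure M (A c))"
proof -
  interpret prob_space M by fact
  have "(\<integral>x. (\<Sum>c\<in>UNIV. w c * indicator (A c) x) \<partial>M) = (\<Sum>c\<in>UNIV. \<integral>x. w c * indicator (A c) x \<partial>M)"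
    using assms(2)
    by (intro Bochner_Integration.integral_sum integrable_mult_right integrable_real_indicator)
      (auto simp: emeasure_eq_measure)
  then show ?thesis
    using assms(2) by (simp only: integral_mult_right_zero integral_indicator emeasure_eq_measure) simp
qed

lemma W_WL_eq_indicator:
  "W_WL (x$c) (y$c) = indicator {y. \<forall>t. y$c$t \<le> x$c$t} y"
  "W_WL (x$c) (y$c) = indicator {x. \<forall>t. y$c$t \<le> x$c$t} x"
  unfolding W_WL_def by (simp_all split: split_indicator)

lemma integrable_payoff_integrand:
  fixes F G :: "(real^'t::finite^'c::finite) measure"
  assumes "prob_space F" "sets F = sets borel" "prob_space G" "sets G = sets borel"
  shows "integrable (F \<Otimes>\<^sub>M G) (\<lambda>(x, y). \<Sum>c\<in>UNIV. v c * W_WL (x $ c) (y $ c))"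
proof -
  interpret pair_prob_space F G
    using assms by (simp add: pair_prob_space_def pair_sigma_finite_def prob_space_imp_sigma_finite)
  have sets_eq: "sets (F \<Otimes>\<^sub>M G) = sets (borel \<Otimes>\<^sub>M borel)"
    by (intro sets_pair_measure_cong) (use assms in auto)
  have "(\<lambda>z. \<Sum>c\<in>UNIV. v c * W_WL (fst z $ c) (snd z $ c))
      \<in> borel_measurable ((borel::(real^'t^'c) measure) \<Otimes>\<^sub>M borel)"
    unfolding W_WL_def by measurable
  then have meas: "(\<lambda>(x, y). \<Sum>c\<in>UNIV. v c * W_WL (x $ c) (y $ c)) \<in> borel_measurable (F \<Otimes>\<^sub>M G)"
    unfolding measurable_cong_sets[OF sets_eq refl] by (simp add: case_prod_beta')
  show ?thesis
    by (rule P.integrable_const_bound[OF _ meas, where B="\<Sum>c\<in>UNIV. \<bar>v c\<bar>"])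
      (auto intro!: AE_I2 order_trans[OF sum_abs] sum_mono simp: W_WL_def abs_mult)
qed

lemma payoff_X_integral_F:
  fixes F G :: "(real^'t::finite^'c::finite) measure"
  assumes "prob_space F" "sets F = sets borel" "prob_space G" "sets G = sets borel"
  shows "payoff_X v F G = (\<integral>x. (\<Sum>c\<in>UNIV. v c * measure G {y. \<forall>t. y$c$t \<le> x$c$t}) \<partial>F)"
    and "integrable F (\<lambda>x. \<Sum>c\<in>UNIV. v c * measure G {y. \<forall>t. y$c$t \<le> x$c$t})"
proof -
  interpret pair_prob_space F G
    using assms by (simp add: pair_prob_space_def pair_sigma_finite_def prob_space_imp_sigma_finite)
  note int = integrable_payoff_integrand[OF assms, of v]
  have inner: "(\<integral>y. (\<Sum>c\<in>UNIV. v c * W_WL (x $ c) (y $ c)) \<partial>G)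
      = (\<Sum>c\<in>UNIV. v c * measure G {y. \<forall>t. y$c$t \<le> x$c$t})" for x
    unfolding W_WL_eq_indicator(1) using assms
    by (intro integral_sum_weighted_indicator) auto
  show "payoff_X v F G = (\<integral>x. (\<Sum>c\<in>UNIV. v c * measure G {y. \<forall>t. y$c$t \<le> x$c$t}) \<partial>F)"
    using integral_fst[OF int] inner by (simp add: payoff_X_def case_prod_beta')
  show "integrable F (\<lambda>x. \<Sum>c\<in>UNIV. v c * measure G {y. \<forall>t. y$c$t \<le> x$c$t})"
    using integrable_fst[OF int] inner by simp
qed

lemma payoff_X_integral_G:
  fixes F G :: "(real^'t::finite^'c::finite) measure"
  assumes "prob_space F" "sets F = sets borel" "prob_space G" "sets G = sets borel"
  shows "payoff_X v F G = (\<integral>y. (\<Sum>c\<in>UNIV. v c * measure F {x. \<forall>t. y$c$t \<le> x$c$t}) \<partial>G)"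
    and "integrable G (\<lambda>y. \<Sum>c\<in>UNIV. v c * measure F {x. \<forall>t. y$c$t \<le> x$c$t})"
proof -
  interpret pair_prob_space F G
    using assms by (simp add: pair_prob_space_def pair_sigma_finite_def prob_space_imp_sigma_finite)
  note int = integrable_payoff_integrand[OF assms, of v]
  have inner: "(\<integral>x. (\<Sum>c\<in>UNIV. v c * W_WL (x $ c) (y $ c)) \<partial>F)
      = (\<Sum>c\<in>UNIV. v c * measure F {x. \<forall>t. y$c$t \<le> x$c$t})" for y
    unfolding W_WL_eq_indicator(2) using assms
    by (intro integral_sum_weighted_indicator) auto
  show "payoff_X v F G = (\<integral>y. (\<Sum>c\<in>UNIV. v c * measure F {x. \<forall>t. y$c$t \<le> x$c$t}) \<partial>G)"
    using integral_snd[OF int] inner by (simp add: payoff_X_def case_prod_beta')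
  show "integrable G (\<lambda>y. \<Sum>c\<in>UNIV. v c * measure F {x. \<forall>t. y$c$t \<le> x$c$t})"
    using integrable_snd[OF int] inner by simp
qed

lemma strategiesD:
  assumes "F \<in> strategies B"
  shows "prob_space F" "sets F = sets borel" "space F = UNIV" "AE x in F. \<forall>c t. 0 \<le> x$c$t"
  using assms sets_eq_imp_space_eq[of F borel] unfolding strategies_def by auto

lemma expected_usage:
  fixes F :: "(real^'t::finite^'c::finite) measure"
  assumes F: "F \<in> strategies B" and "0 \<le> B t"
  shows "integrable F (\<lambda>x. \<Sum>c\<in>UNIV. x$c$t)" "(\<integral>x. (\<Sum>c\<in>UNIV. x$c$t) \<partial>F) \<le> B t"
proof -
  note F' = strategiesD[OF F]
  have meas: "(\<lambda>x. \<Sum>c\<in>UNIV. x$c$t) \<in> borel_measurable F"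
    unfolding measurable_cong_sets[OF F'(2) refl] by measurable
  have nonneg: "AE x in F. 0 \<le> (\<Sum>c\<in>UNIV. x$c$t)"
    using F'(4) by eventually_elim (auto intro: sum_nonneg)
  have le: "(\<integral>\<^sup>+x. ennreal (\<Sum>c\<in>UNIV. x$c$t) \<partial>F) \<le> ennreal (B t)"
    using F unfolding strategies_def by auto
  then show "integrable F (\<lambda>x. \<Sum>c\<in>UNIV. x$c$t)"
    by (intro integrableI_nonneg[OF meas nonneg]) (auto simp: le_less_trans)
  show "(\<integral>x. (\<Sum>c\<in>UNIV. x$c$t) \<partial>F) \<le> B t"
    unfolding integral_eq_nn_integral[OF meas nonneg] using le \<open>0 \<le> B t\<close>
    by (intro enn2real_leI) auto
qed

lemma expected_weighted_usage:
  fixes F :: "(real^'t::finite^'c::finite) measure"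
  assumes F: "F \<in> strategies B" and B: "\<And>t. 0 \<le> B t" and w: "\<And>t. 0 \<le> w t"
  shows "integrable F (\<lambda>x. \<Sum>t\<in>UNIV. w t * (\<Sum>c\<in>UNIV. x$c$t))"
    and "(\<integral>x. (\<Sum>t\<in>UNIV. w t * (\<Sum>c\<in>UNIV. x$c$t)) \<partial>F) \<le> (\<Sum>t\<in>UNIV. w t * B t)"
proof -
  show "integrable F (\<lambda>x. \<Sum>t\<in>UNIV. w t * (\<Sum>c\<in>UNIV. x$c$t))"
    using expected_usage(1)[OF F B] by auto
  have "(\<integral>x. (\<Sum>t\<in>UNIV. w t * (\<Sum>c\<in>UNIV. x$c$t)) \<partial>F)
      = (\<Sum>t\<in>UNIV. w t * (\<integral>x. (\<Sum>c\<in>UNIV. x$c$t) \<partial>F))"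
    using expected_usage(1)[OF F B] by (simp add: Bochner_Integration.integral_sum)
  also have "\<dots> \<le> (\<Sum>t\<in>UNIV. w t * B t)"
    by (intro sum_mono mult_left_mono expected_usage(2)[OF F B] w)
  finally show "(\<integral>x. (\<Sum>t\<in>UNIV. w t * (\<Sum>c\<in>UNIV. x$c$t)) \<partial>F) \<le> (\<Sum>t\<in>UNIV. w t * B t)" .
qed

lemma mix_in_strategies:
  fixes g :: "'a::finite \<Rightarrow> real \<Rightarrow> real^'t::finite^'c::finite"
  assumes g: "\<And>a. g a \<in> borel_measurable borel" and nonneg: "\<And>a s c t. 0 \<le> g a s $ c $ t"
    and budget: "\<And>t. (\<Sum>a\<in>UNIV. ennreal (pmf P a) *
      (\<integral>\<^sup>+s. ennreal (\<Sum>c\<in>UNIV. g a s $ c $ t) \<partial>uniform01)) \<le> ennreal (B t)"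
  shows "mix P g \<in> strategies B"
proof -
  have "AE x in mix P g. \<forall>c t. 0 \<le> x$c$t"
    unfolding mix_def
    by (subst AE_distr_iff[OF measurable_mix_kernel[OF g]]) (auto intro!: AE_I2 nonneg)
  moreover have "(\<integral>\<^sup>+x. ennreal (\<Sum>c\<in>UNIV. x$c$t) \<partial>mix P g) \<le> ennreal (B t)" for t
    using budget[of t] by (subst nn_integral_mix[OF g]) simp_all
  ultimately show ?thesis
    unfolding strategies_def using prob_space_mix[OF g] by auto
qed

section \<open>A strategy's marginals determine its contest-wise distributions\<close>

lemma vec_measure_eqI_atMost:
  fixes M N :: "(real^'n::finite) measure"
  assumes sets: "sets M = sets borel" "sets N = sets borel" and "finite_measure M"
    and eq: "\<And>a. emeasure M {..a} = emeasure N {..a}"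
  shows "M = N"
proof (rule measure_eqI_generator_eq[where E="range atMost" and \<Omega>=UNIV and A="\<lambda>i. {..(\<chi> t. real i)}"])
  show "Int_stable (range atMost :: (real^'n) set set)"
  proof (rule Int_stableI)
    fix A B :: "(real^'n) set" assume "A \<in> range atMost" "B \<in> range atMost"
    then obtain p q where "A = {..p}" "B = {..q}" by auto
    then have "A \<inter> B = {..(\<chi> t. min (p$t) (q$t))}"
      by (auto simp: less_eq_vec_def)
    then show "A \<inter> B \<in> range atMost" by blast
  qed
  have "sets (borel :: (real^'n) measure) = sigma_sets UNIV (range atMost)"
    by (subst borel_eq_atMost) (simp add: sets_measure_of)
  then show "sets M = sigma_sets UNIV (range atMost)" "sets N = sigma_sets UNIV (range atMost)"
    using sets by simp_all
  show "(\<Union>i. {..(\<chi> t. real i)}) = (UNIV :: (real^'n) set)"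
  proof (safe; simp)
    fix z :: "real^'n"
    obtain k :: nat where "Max (range (\<lambda>t. z$t)) \<le> real k" using real_arch_simple by blast
    then show "\<exists>i. z \<le> (\<chi> t. real i)"
      by (auto simp: less_eq_vec_def Max_le_iff)
  qed
  show "emeasure M {..(\<chi> t. real i)} \<noteq> \<infinity>" for i
    using \<open>finite_measure M\<close> by (simp add: finite_measure.emeasure_finite)
qed (use eq in auto)

text \<open>The marginals are prescribed only on the nonnegative orthant; the remaining lower orthants
  are null because allocations are almost surely nonnegative.\<close>

lemma emeasure_distr_component_atMost:
  fixes F :: "(real^'t::finite^'c::finite) measure"
  assumes F: "F \<in> strategies B"
  shows "emeasure (distr F borel (\<lambda>x. x$c)) {..a}
    = (if \<forall>t. 0 \<le> a$t then ennreal (marginal F c a) else 0)"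
proof -
  note F' = strategiesD[OF F]
  interpret prob_space F by (rule F'(1))
  have "(\<lambda>x. x$c) \<in> measurable F borel"
    unfolding measurable_cong_sets[OF F'(2) refl] by measurable
  moreover have "(\<lambda>x. x$c) -` {..a} = {x. \<forall>t. x$c$t \<le> a$t}"
    by (auto simp: less_eq_vec_def)
  ultimately have distr_eq:
      "emeasure (distr F borel (\<lambda>x. x$c)) {..a} = emeasure F {x. \<forall>t. x$c$t \<le> a$t}"
    by (subst emeasure_distr) (auto simp: F'(3))
  show ?thesis
  proof (cases "\<forall>t. 0 \<le> a$t")
    case True
    then show ?thesis by (simp add: distr_eq marginal_def emeasure_eq_measure)
  next
    case False
    then obtain t0 where t0: "a$t0 < 0" by (auto simp: not_le)
    have "AE x in F. \<not> (\<forall>t. x$c$t \<le> a$t)"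
      using F'(4) by eventually_elim (use t0 in \<open>metis not_le order_less_le_trans\<close>)
    from emeasure_eq_0_AE[OF this] show ?thesis
      unfolding if_not_P[OF False] by (simp add: distr_eq F'(3))
  qed
qed

lemma measure_component_eq_if_marginal_eq:
  fixes F G :: "(real^'t::finite^'c::finite) measure"
  assumes F: "F \<in> strategies B" and G: "G \<in> strategies B'"
    and eq: "\<And>u. \<forall>t. 0 \<le> u$t \<Longrightarrow> marginal F c u = marginal G c u"
    and A: "A \<in> sets borel"
  shows "measure F {x. x$c \<in> A} = measure G {x. x$c \<in> A}"
proof -
  note F' = strategiesD[OF F] and G' = strategiesD[OF G]
  have mF: "(\<lambda>x. x$c) \<in> measurable F borel"
    unfolding measurable_cong_sets[OF F'(2) refl] by measurable
  have mG: "(\<lambda>x. x$c) \<in> measurable G borel"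
    unfolding measurable_cong_sets[OF G'(2) refl] by measurable
  have "distr F borel (\<lambda>x. x$c) = distr G borel (\<lambda>x. x$c)"
  proof (rule vec_measure_eqI_atMost)
    show "finite_measure (distr F borel (\<lambda>x. x$c))"
      using prob_space.prob_space_distr[OF F'(1) mF] by (simp add: prob_space_def)
    show "emeasure (distr F borel (\<lambda>x. x$c)) {..a} = emeasure (distr G borel (\<lambda>x. x$c)) {..a}" for a
      by (simp add: emeasure_distr_component_atMost[OF F] emeasure_distr_component_atMost[OF G] eq)
  qed simp_all
  then show ?thesis
    using measure_distr[OF mF A] measure_distr[OF mG A] by (simp add: F'(3) G'(3) vimage_def)
qed

section \<open>The candidate equilibrium strategies\<close>

locale weakest_link_lotto =
  fixes v :: "'c::finite \<Rightarrow> real" and X Y :: "'t::finite \<Rightarrow> real"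
  assumes v_pos: "\<And>c. 0 < v c" and v_sum: "(\<Sum>c\<in>UNIV. v c) = 1"
    and X_pos: "\<And>t. 0 < X t" and Y_nonneg: "\<And>t. 0 \<le> Y t"
begin

definition \<alpha> :: real where "\<alpha> = alpha X Y"

definition \<beta> :: real where "\<beta> = max 1 \<alpha>"

definition k :: "'c \<Rightarrow> 't \<Rightarrow> real" where "k c t = 2 * v c * X t * \<beta>"

lemma alpha_nonneg: "0 \<le> \<alpha>"
  unfolding \<alpha>_def alpha_def by (intro sum_nonneg divide_nonneg_pos Y_nonneg X_pos)

lemma beta_ge_1: "1 \<le> \<beta>" and beta_ge_alpha: "\<alpha> \<le> \<beta>" and beta_pos: "0 < \<beta>"
  unfolding \<beta>_def by auto

lemma beta_cases: "(\<alpha> \<le> 1 \<and> \<beta> = 1) \<or> (1 < \<alpha> \<and> \<beta> = \<alpha>)"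
  unfolding \<beta>_def by auto

lemma L_alpha_eq: "L \<alpha> = 1 / \<beta> - \<alpha> / (2 * \<beta>\<^sup>2)" "L \<alpha> = 1 - \<alpha> / \<beta> + \<alpha> / (2 * \<beta>\<^sup>2)"
  using beta_cases unfolding L_def by (auto simp: field_simps power2_eq_square)

lemma k_pos: "0 < k c t"
  unfolding k_def using v_pos X_pos beta_pos by auto

lemma v_div_k: "v c / k c t = 1 / (2 * X t * \<beta>)"
  unfolding k_def using v_pos[of c] by simp

lemma sum_k: "(\<Sum>c\<in>UNIV. k c t) = 2 * X t * \<beta>"
proof -
  have "(\<Sum>c\<in>UNIV. k c t) = (\<Sum>c\<in>UNIV. v c) * (2 * X t * \<beta>)"
    unfolding k_def sum_distrib_right by (simp add: mult_ac)
  then show ?thesis using v_sum by simp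
qed

lemma FX_star_eq:
  "FX_star v X Y c u = 1 - 1/\<beta> + (1/\<beta>) * Min ((\<lambda>t. min (u$t / k c t) 1) ` UNIV)"
  using beta_cases unfolding FX_star_def Let_def \<alpha>_def[symmetric] k_def by auto

lemma FY_star_eq:
  "FY_star v X Y c u = 1 - \<alpha>/\<beta> + (\<Sum>t\<in>UNIV. (Y t / X t / \<beta>) * min (u$t / k c t) 1)"
proof (cases "\<alpha> = 0")
  case True
  then have "\<forall>t\<in>UNIV. Y t / X t = 0"
    unfolding \<alpha>_def alpha_def
    by (subst (asm) sum_nonneg_eq_0_iff) (auto intro: divide_nonneg_pos Y_nonneg X_pos)
  then have "\<forall>t. Y t = 0" using X_pos by (simp add: less_imp_neq[symmetric])
  then show ?thesis using True beta_cases unfolding FY_star_def Let_def \<alpha>_def[symmetric] by auto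
next
  case False
  then show ?thesis
    using beta_cases alpha_nonneg unfolding FY_star_def Let_def \<alpha>_def[symmetric] k_def
    by (auto simp: sum_distrib_left)
qed

text \<open>Taking \<open>\<bar>s\<bar>\<close> rather than \<open>s\<close> keeps the allocations nonnegative everywhere and not just
  almost surely.\<close>

definition alloc_X :: "bool \<Rightarrow> real \<Rightarrow> real^'t^'c" where
  "alloc_X active s = (\<chi> c t. (if active then k c t else 0) * \<bar>s\<bar>)"

definition alloc_Y :: "'t option \<Rightarrow> real \<Rightarrow> real^'t^'c" where
  "alloc_Y q s = (\<chi> c t. (if q = Some t then k c t else 0) * \<bar>s\<bar>)"

definition weight_Y :: "'t option \<Rightarrow> real" where
  "weight_Y q = (case q of None \<Rightarrow> 1 - \<alpha> / \<beta> | Some t \<Rightarrow> Y t / X t / \<beta>)"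

definition strat_X :: "(real^'t^'c) measure" where
  "strat_X = mix (bernoulli_pmf (1 / \<beta>)) alloc_X"

definition strat_Y :: "(real^'t^'c) measure" where
  "strat_Y = mix (embed_pmf weight_Y) alloc_Y"

lemma alloc_X_nth[simp]: "alloc_X active s $ c $ t = (if active then k c t else 0) * \<bar>s\<bar>"
  unfolding alloc_X_def by simp

lemma alloc_Y_nth[simp]: "alloc_Y q s $ c $ t = (if q = Some t then k c t else 0) * \<bar>s\<bar>"
  unfolding alloc_Y_def by simp

lemma borel_measurable_alloc_X: "alloc_X active \<in> borel_measurable borel"
  unfolding alloc_X_def
  by (intro borel_measurable_continuous_onI continuous_on_vec_lambda) (auto intro!: continuous_intros)

lemma borel_measurable_alloc_Y: "alloc_Y q \<in> borel_measurable borel"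
  unfolding alloc_Y_def
  by (intro borel_measurable_continuous_onI continuous_on_vec_lambda) (auto intro!: continuous_intros)

lemma weight_Y_nonneg: "0 \<le> weight_Y q"
  using beta_ge_alpha beta_pos X_pos Y_nonneg
  by (cases q) (auto simp: weight_Y_def intro!: divide_nonneg_pos)

lemma pmf_weight_Y: "pmf (embed_pmf weight_Y) q = weight_Y q"
proof (rule pmf_embed_pmf[OF weight_Y_nonneg])
  have "(\<Sum>t\<in>UNIV. Y t / X t / \<beta>) = \<alpha> / \<beta>"
    unfolding \<alpha>_def alpha_def by (simp add: sum_divide_distrib)
  then have "(\<Sum>q\<in>UNIV. weight_Y q) = 1"
    unfolding sum_UNIV_option weight_Y_def by simp
  then show "(\<integral>\<^sup>+ q. ennreal (weight_Y q) \<partial>count_space UNIV) = 1"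
    by (simp add: nn_integral_count_space_finite weight_Y_nonneg)
qed

lemma pmf_bernoulli_beta:
  "pmf (bernoulli_pmf (1/\<beta>)) True = 1/\<beta>" "pmf (bernoulli_pmf (1/\<beta>)) False = 1 - 1/\<beta>"
  using beta_ge_1 by auto

lemma usage_alloc_X:
  "(\<Sum>c\<in>UNIV. alloc_X active s $ c $ t) = (if active then 2 * X t * \<beta> else 0) * \<bar>s\<bar>"
  by (simp add: sum_distrib_right[symmetric] sum_k)

lemma usage_alloc_Y:
  "(\<Sum>c\<in>UNIV. alloc_Y q s $ c $ t) = (if q = Some t then 2 * X t * \<beta> else 0) * \<bar>s\<bar>"
  by (simp add: sum_distrib_right[symmetric] sum_k)

lemma strat_X_in_strategies: "strat_X \<in> strategies X"
  unfolding strat_X_def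
proof (rule mix_in_strategies[OF borel_measurable_alloc_X])
  show "0 \<le> alloc_X active s $ c $ t" for active s c t
    using k_pos[of c t] by simp
  show "(\<Sum>active\<in>UNIV. ennreal (pmf (bernoulli_pmf (1/\<beta>)) active) *
      (\<integral>\<^sup>+s. ennreal (\<Sum>c\<in>UNIV. alloc_X active s $ c $ t) \<partial>uniform01)) \<le> ennreal (X t)" for t
    unfolding usage_alloc_X using X_pos[of t] beta_pos beta_ge_1
    by (simp add: UNIV_bool nn_integral_uniform01_scaled_abs pmf_bernoulli_beta
        ennreal_mult[symmetric])
qed

lemma strat_Y_in_strategies: "strat_Y \<in> strategies Y"
  unfolding strat_Y_def
proof (rule mix_in_strategies[OF borel_measurable_alloc_Y])
  show "0 \<le> alloc_Y q s $ c $ t" for q s c t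
    using k_pos[of c t] by simp
  fix t
  have "(\<integral>\<^sup>+s. ennreal ((if q = Some t then 2 * X t * \<beta> else 0) * \<bar>s\<bar>) \<partial>uniform01)
      = ennreal (if q = Some t then X t * \<beta> else 0)" for q
    using X_pos[of t] beta_pos by (simp add: nn_integral_uniform01_scaled_abs)
  then have "(\<Sum>q\<in>UNIV. ennreal (weight_Y q) *
      (\<integral>\<^sup>+s. ennreal ((if q = Some t then 2 * X t * \<beta> else 0) * \<bar>s\<bar>) \<partial>uniform01))
      = (\<Sum>q\<in>UNIV. if q = Some t then ennreal (weight_Y q) * ennreal (X t * \<beta>) else 0)"
    by (intro sum.cong) auto
  also have "\<dots> = ennreal (weight_Y (Some t) * (X t * \<beta>))"
    using X_pos[of t] beta_pos weight_Y_nonneg[of "Some t"] by (simp add: ennreal_mult)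
  also have "weight_Y (Some t) * (X t * \<beta>) = Y t"
    using X_pos[of t] beta_pos by (simp add: weight_Y_def)
  finally show "(\<Sum>q\<in>UNIV. ennreal (pmf (embed_pmf weight_Y) q) *
      (\<integral>\<^sup>+s. ennreal (\<Sum>c\<in>UNIV. alloc_Y q s $ c $ t) \<partial>uniform01)) \<le> ennreal (Y t)"
    unfolding usage_alloc_Y pmf_weight_Y by simp
qed

lemma marginal_strat_X:
  assumes u: "\<forall>t. 0 \<le> u$t"
  shows "marginal strat_X c u = FX_star v X Y c u"
proof -
  interpret U: prob_space uniform01 by (rule prob_space_uniform01)
  define m where "m = Min ((\<lambda>t. min (u$t / k c t) 1) ` UNIV)"
  have "0 \<le> m"
    unfolding m_def using u k_pos by (subst Min_ge_iff) (auto intro: divide_nonneg_pos)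
  moreover have "s \<le> m \<longleftrightarrow> (\<forall>t. s \<le> u$t / k c t) \<and> s \<le> 1" for s
    unfolding m_def by (subst Min_ge_iff) auto
  then have "{0..1} \<inter> {s. alloc_X True s \<in> {x. \<forall>t. x$c$t \<le> u$t}} = {0..m}"
    using k_pos by (auto simp: pos_le_divide_eq mult.commute)
  ultimately have "measure uniform01 {s. alloc_X True s \<in> {x. \<forall>t. x$c$t \<le> u$t}} = m"
    by (intro measure_uniform01_eq) auto
  moreover have "{s. alloc_X False s \<in> {x. \<forall>t. x$c$t \<le> u$t}} = UNIV"
    using u by auto
  ultimately show ?thesis
    unfolding marginal_def strat_X_def FX_star_eq m_def[symmetric]
    using U.prob_space u
    by (subst measure_mix[OF borel_measurable_alloc_X]) (simp_all add: UNIV_bool pmf_bernoulli_beta)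
qed

lemma marginal_strat_Y:
  assumes u: "\<forall>t. 0 \<le> u$t"
  shows "marginal strat_Y c u = FY_star v X Y c u"
proof -
  interpret U: prob_space uniform01 by (rule prob_space_uniform01)
  have "measure uniform01 {s. alloc_Y (Some t0) s \<in> {x. \<forall>t. x$c$t \<le> u$t}} = min (u$t0 / k c t0) 1" for t0
  proof (rule measure_uniform01_eq)
    show "{0..1} \<inter> {s. alloc_Y (Some t0) s \<in> {x. \<forall>t. x$c$t \<le> u$t}} = {0..min (u$t0 / k c t0) 1}"
      using k_pos[of c t0] u by (auto simp: pos_le_divide_eq mult.commute)
  qed (use k_pos[of c t0] u in \<open>auto intro: divide_nonneg_pos\<close>)
  moreover have "{s. alloc_Y None s \<in> {x. \<forall>t. x$c$t \<le> u$t}} = UNIV"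
    using u by auto
  ultimately show ?thesis
    unfolding marginal_def strat_Y_def FY_star_eq using U.prob_space u
    by (subst measure_mix[OF borel_measurable_alloc_Y])
      (simp_all add: sum_UNIV_option pmf_weight_Y weight_Y_def)
qed

lemma survival_strat_X_ge:
  assumes y: "\<forall>t. 0 \<le> y$t"
  shows "(1 - (\<Sum>t\<in>UNIV. y$t / k c t)) / \<beta> \<le> measure strat_X {x. \<forall>t. y$t \<le> x$c$t}"
proof -
  interpret U: prob_space uniform01 by (rule prob_space_uniform01)
  define S where "S = (\<Sum>t\<in>UNIV. y$t / k c t)"
  have "0 \<le> S"
    unfolding S_def using y k_pos by (auto intro!: sum_nonneg divide_nonneg_pos)
  have "{s. S \<le> s} \<subseteq> {s. \<forall>t. y$t \<le> k c t * \<bar>s\<bar>}"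
  proof safe
    fix s t assume "S \<le> s"
    moreover have "y$t / k c t \<le> S"
      unfolding S_def by (rule member_le_sum) (use y k_pos in \<open>auto intro: divide_nonneg_pos\<close>)
    ultimately have "y$t / k c t \<le> \<bar>s\<bar>" by simp
    then show "y$t \<le> k c t * \<bar>s\<bar>"
      using k_pos[of c t] by (simp add: pos_divide_le_eq mult.commute)
  qed
  then have "measure uniform01 {s. S \<le> s} \<le> measure uniform01 {s. \<forall>t. y$t \<le> k c t * \<bar>s\<bar>}"
    by (intro U.finite_measure_mono) measurable
  then have "(1 - S) / \<beta> \<le> (1/\<beta>) * measure uniform01 {s. \<forall>t. y$t \<le> k c t * \<bar>s\<bar>}"
    using measure_uniform01_ge[OF \<open>0 \<le> S\<close>] beta_pos by (simp add: divide_right_mono)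
  moreover have "0 \<le> (1 - 1/\<beta>) * measure uniform01 {s. \<forall>t. y$t \<le> 0}"
    using beta_ge_1 by (intro mult_nonneg_nonneg measure_nonneg) simp
  moreover have "measure strat_X {x. \<forall>t. y$t \<le> x$c$t}
      = (1 - 1/\<beta>) * measure uniform01 {s. \<forall>t. y$t \<le> 0}
        + (1/\<beta>) * measure uniform01 {s. \<forall>t. y$t \<le> k c t * \<bar>s\<bar>}"
    unfolding strat_X_def
    by (subst measure_mix[OF borel_measurable_alloc_X]) (simp_all add: UNIV_bool pmf_bernoulli_beta)
  ultimately show ?thesis
    unfolding S_def by linarith
qed

lemma weighted_win_prob_strat_X_ge:
  assumes y: "\<forall>c t. 0 \<le> y$c$t"
  shows "1/\<beta> - (\<Sum>t\<in>UNIV. 1 / (2 * X t * \<beta>\<^sup>2) * (\<Sum>c\<in>UNIV. y$c$t))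
    \<le> (\<Sum>c\<in>UNIV. v c * measure strat_X {x. \<forall>t. y$c$t \<le> x$c$t})"
proof -
  have "v c * ((1 - (\<Sum>t\<in>UNIV. y$c$t / k c t)) / \<beta>)
      = v c / \<beta> - (\<Sum>t\<in>UNIV. 1 / (2 * X t * \<beta>\<^sup>2) * y$c$t)" for c
  proof -
    have "v c * ((1 - (\<Sum>t\<in>UNIV. y$c$t / k c t)) / \<beta>)
        = v c / \<beta> - (v c * (\<Sum>t\<in>UNIV. y$c$t / k c t)) / \<beta>"
      by (simp add: diff_divide_distrib right_diff_distrib)
    also have "\<dots> = v c / \<beta> - (\<Sum>t\<in>UNIV. (v c / k c t) * y$c$t / \<beta>)"
      by (simp add: sum_distrib_left sum_divide_distrib)
    finally show ?thesis
      unfolding v_div_k by (simp add: power2_eq_square mult.assoc)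
  qed
  then have "(\<Sum>c\<in>UNIV. v c * ((1 - (\<Sum>t\<in>UNIV. y$c$t / k c t)) / \<beta>))
      = 1/\<beta> - (\<Sum>t\<in>UNIV. 1 / (2 * X t * \<beta>\<^sup>2) * (\<Sum>c\<in>UNIV. y$c$t))"
    by (simp add: sum_subtractf sum_divide_distrib[symmetric] v_sum sum_distrib_left sum.swap[of _ UNIV])
  moreover have "(\<Sum>c\<in>UNIV. v c * ((1 - (\<Sum>t\<in>UNIV. y$c$t / k c t)) / \<beta>))
      \<le> (\<Sum>c\<in>UNIV. v c * measure strat_X {x. \<forall>t. y$c$t \<le> x$c$t})"
    using y v_pos by (intro sum_mono mult_left_mono survival_strat_X_ge) (auto intro: less_imp_le)
  ultimately show ?thesis by simp
qed

lemma weighted_FY_star_le: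
  assumes x: "\<forall>c t. 0 \<le> x$c$t"
  shows "(\<Sum>c\<in>UNIV. v c * FY_star v X Y c (x$c))
    \<le> 1 - \<alpha>/\<beta> + (\<Sum>t\<in>UNIV. Y t / (2 * (X t)\<^sup>2 * \<beta>\<^sup>2) * (\<Sum>c\<in>UNIV. x$c$t))"
proof -
  have "v c * FY_star v X Y c (x$c) \<le> v c * (1 - \<alpha>/\<beta>) + (\<Sum>t\<in>UNIV. Y t / (2 * (X t)\<^sup>2 * \<beta>\<^sup>2) * x$c$t)"
    for c
  proof -
    have "FY_star v X Y c (x$c) \<le> 1 - \<alpha>/\<beta> + (\<Sum>t\<in>UNIV. (Y t / X t / \<beta>) * (x$c$t / k c t))"
      unfolding FY_star_eq using X_pos Y_nonneg beta_pos
      by (intro add_left_mono sum_mono mult_left_mono) (auto intro!: divide_nonneg_pos)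
    then have "v c * FY_star v X Y c (x$c)
        \<le> v c * (1 - \<alpha>/\<beta> + (\<Sum>t\<in>UNIV. (Y t / X t / \<beta>) * (x$c$t / k c t)))"
      using v_pos[of c] by (simp add: mult_left_mono)
    also have "\<dots> = v c * (1 - \<alpha>/\<beta>) + (\<Sum>t\<in>UNIV. (Y t / X t / \<beta>) * (v c / k c t) * x$c$t)"
      by (simp add: distrib_left sum_distrib_left mult_ac)
    also have "\<dots> = v c * (1 - \<alpha>/\<beta>) + (\<Sum>t\<in>UNIV. Y t / (2 * (X t)\<^sup>2 * \<beta>\<^sup>2) * x$c$t)"
      unfolding v_div_k by (simp add: power2_eq_square mult_ac)
    finally show ?thesis .
  qed
  then have "(\<Sum>c\<in>UNIV. v c * FY_star v X Y c (x$c))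
      \<le> (\<Sum>c\<in>UNIV. v c * (1 - \<alpha>/\<beta>) + (\<Sum>t\<in>UNIV. Y t / (2 * (X t)\<^sup>2 * \<beta>\<^sup>2) * x$c$t))"
    by (rule sum_mono)
  also have "\<dots> = 1 - \<alpha>/\<beta> + (\<Sum>t\<in>UNIV. Y t / (2 * (X t)\<^sup>2 * \<beta>\<^sup>2) * (\<Sum>c\<in>UNIV. x$c$t))"
    unfolding sum.distrib sum_distrib_right[symmetric] v_sum
    by (subst sum.swap) (simp add: sum_distrib_left)
  finally show ?thesis .
qed

section \<open>Both players can guarantee \<open>L \<alpha>\<close>\<close>

lemma L_le_payoff_X:
  assumes F: "F \<in> strategies X" and G: "G \<in> strategies Y"
    and marg: "\<forall>c u. (\<forall>t. 0 \<le> u$t) \<longrightarrow> marginal F c u = FX_star v X Y c u"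
  shows "L \<alpha> \<le> payoff_X v F G"
proof -
  note F' = strategiesD[OF F] and G' = strategiesD[OF G]
  interpret G: prob_space G by (rule G'(1))
  define w where "w t = 1 / (2 * X t * \<beta>\<^sup>2)" for t
  have "0 \<le> w t" for t
    using X_pos[of t] by (simp add: w_def)
  note usage = expected_weighted_usage[OF G Y_nonneg this]
  have same_win: "measure F {x. \<forall>t. y$c$t \<le> x$c$t} = measure strat_X {x. \<forall>t. y$c$t \<le> x$c$t}" for y c
    using measure_component_eq_if_marginal_eq[OF F strat_X_in_strategies, of c "{z. \<forall>t. y$c$t \<le> z$t}"]
    by (simp add: marg marginal_strat_X)
  have win: "1/\<beta> - (\<Sum>t\<in>UNIV. w t * (\<Sum>c\<in>UNIV. y$c$t))
      \<le> (\<Sum>c\<in>UNIV. v c * measure F {x. \<forall>t. y$c$t \<le> x$c$t})" if "\<forall>c t. 0 \<le> y$c$t" for y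
    using weighted_win_prob_strat_X_ge[OF that] by (simp add: same_win w_def)
  have "(\<Sum>t\<in>UNIV. w t * Y t) = \<alpha> / (2 * \<beta>\<^sup>2)"
    unfolding w_def \<alpha>_def alpha_def by (simp add: sum_divide_distrib mult_ac)
  then have "L \<alpha> = 1/\<beta> - (\<Sum>t\<in>UNIV. w t * Y t)"
    by (simp add: L_alpha_eq(1))
  also have "\<dots> \<le> 1/\<beta> - (\<integral>y. (\<Sum>t\<in>UNIV. w t * (\<Sum>c\<in>UNIV. y$c$t)) \<partial>G)"
    using usage(2) by simp
  also have "\<dots> = (\<integral>y. 1/\<beta> - (\<Sum>t\<in>UNIV. w t * (\<Sum>c\<in>UNIV. y$c$t)) \<partial>G)"
    using usage(1) by (simp add: Bochner_Integration.integral_diff G.prob_space)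
  also have "\<dots> \<le> (\<integral>y. (\<Sum>c\<in>UNIV. v c * measure F {x. \<forall>t. y$c$t \<le> x$c$t}) \<partial>G)"
    using G'(4) usage(1) payoff_X_integral_G(2)[OF F'(1,2) G'(1,2)]
    by (intro integral_mono_AE) (auto elim!: eventually_mono intro: win)
  also have "\<dots> = payoff_X v F G"
    by (rule payoff_X_integral_G(1)[OF F'(1,2) G'(1,2), symmetric])
  finally show ?thesis .
qed

lemma payoff_X_le_L:
  assumes F: "F \<in> strategies X" and G: "G \<in> strategies Y"
    and marg: "\<forall>c u. (\<forall>t. 0 \<le> u$t) \<longrightarrow> marginal G c u = FY_star v X Y c u"
  shows "payoff_X v F G \<le> L \<alpha>"
proof -
  note F' = strategiesD[OF F] and G' = strategiesD[OF G]
  interpret F: prob_space F by (rule F'(1))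
  define w where "w t = Y t / (2 * (X t)\<^sup>2 * \<beta>\<^sup>2)" for t
  have "0 \<le> w t" for t
    using X_pos[of t] Y_nonneg[of t] by (simp add: w_def)
  note usage = expected_weighted_usage[OF F less_imp_le[OF X_pos] this]
  have loss: "(\<Sum>c\<in>UNIV. v c * measure G {y. \<forall>t. y$c$t \<le> x$c$t})
      \<le> 1 - \<alpha>/\<beta> + (\<Sum>t\<in>UNIV. w t * (\<Sum>c\<in>UNIV. x$c$t))" if "\<forall>c t. 0 \<le> x$c$t" for x
    using weighted_FY_star_le[OF that] marg that by (simp add: marginal_def w_def)
  have "payoff_X v F G = (\<integral>x. (\<Sum>c\<in>UNIV. v c * measure G {y. \<forall>t. y$c$t \<le> x$c$t}) \<partial>F)"
    by (rule payoff_X_integral_F(1)[OF F'(1,2) G'(1,2)])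
  also have "\<dots> \<le> (\<integral>x. 1 - \<alpha>/\<beta> + (\<Sum>t\<in>UNIV. w t * (\<Sum>c\<in>UNIV. x$c$t)) \<partial>F)"
    using F'(4) usage(1) payoff_X_integral_F(2)[OF F'(1,2) G'(1,2)]
    by (intro integral_mono_AE) (auto elim!: eventually_mono intro: loss)
  also have "\<dots> = 1 - \<alpha>/\<beta> + (\<integral>x. (\<Sum>t\<in>UNIV. w t * (\<Sum>c\<in>UNIV. x$c$t)) \<partial>F)"
    using usage(1) by (simp add: Bochner_Integration.integral_add F.prob_space)
  also have "\<dots> \<le> 1 - \<alpha>/\<beta> + (\<Sum>t\<in>UNIV. w t * X t)"
    using usage(2) by simp
  also have "(\<Sum>t\<in>UNIV. w t * X t) = \<alpha> / (2 * \<beta>\<^sup>2)"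
    unfolding w_def \<alpha>_def alpha_def sum_divide_distrib using X_pos
    by (intro sum.cong refl) (simp add: power2_eq_square field_simps)
  also have "1 - \<alpha>/\<beta> + \<alpha> / (2 * \<beta>\<^sup>2) = L \<alpha>"
    by (simp add: L_alpha_eq(2))
  finally show ?thesis .
qed

lemma equilibrium_of_marginals:
  assumes F: "F \<in> strategies X" and G: "G \<in> strategies Y"
    and marg: "\<forall>c u. (\<forall>t. 0 \<le> u$t) \<longrightarrow>
      marginal F c u = FX_star v X Y c u \<and> marginal G c u = FY_star v X Y c u"
  shows "equilibrium v X Y F G"
proof -
  have "payoff_X v F G = L \<alpha>"
    using L_le_payoff_X[OF F G] payoff_X_le_L[OF F G] marg by (simp add: order_antisym)
  then show ?thesis
    unfolding equilibrium_def using F G marg L_le_payoff_X[OF F] payoff_X_le_L[OF _ G] by auto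
qed

lemma marginals_strat_XY:
  "\<forall>c u. (\<forall>t. 0 \<le> u$t) \<longrightarrow>
    marginal strat_X c u = FX_star v X Y c u \<and> marginal strat_Y c u = FY_star v X Y c u"
  by (simp add: marginal_strat_X marginal_strat_Y)

lemma payoff_X_of_equilibrium:
  assumes "equilibrium v X Y F G"
  shows "payoff_X v F G = L \<alpha>"
proof -
  have F: "F \<in> strategies X" and G: "G \<in> strategies Y"
    using assms unfolding equilibrium_def by auto
  have "L \<alpha> \<le> payoff_X v strat_X G"
    using L_le_payoff_X[OF strat_X_in_strategies G] marginals_strat_XY by blast
  moreover have "payoff_X v strat_X G \<le> payoff_X v F G"
    using assms strat_X_in_strategies unfolding equilibrium_def by blast
  moreover have "payoff_X v F G \<le> payoff_X v F strat_Y"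
    using assms strat_Y_in_strategies unfolding equilibrium_def by blast
  moreover have "payoff_X v F strat_Y \<le> L \<alpha>"
    using payoff_X_le_L[OF F strat_Y_in_strategies] marginals_strat_XY by blast
  ultimately show ?thesis by linarith
qed

end

theorem theorem2:
  fixes v :: "'c::finite \<Rightarrow> real" and X Y :: "'t::finite \<Rightarrow> real"
  assumes v_pos: "\<And>c. v c > 0"
    and v_sum: "(\<Sum>c\<in>UNIV. v c) = 1"
    and X_pos: "\<And>t. X t > 0"
    and Y_nonneg: "\<And>t. Y t \<ge> 0"
  shows "(\<exists>F G. equilibrium v X Y (F :: (real^'t^'c) measure) G)
    \<and> (\<forall>F G. equilibrium v X Y (F :: (real^'t^'c) measure) G \<longrightarrow>
          payoff_X v F G = L (alpha X Y) \<and> payoff_Y v F G = 1 - L (alpha X Y))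
    \<and> (\<exists>F G. F \<in> strategies X \<and> G \<in> strategies Y \<and>
          (\<forall>c u. (\<forall>t. 0 \<le> u$t) \<longrightarrow>
             marginal (F :: (real^'t^'c) measure) c u = FX_star v X Y c u \<and>
             marginal G c u = FY_star v X Y c u))
    \<and> (\<forall>F G. F \<in> strategies X \<and> G \<in> strategies Y \<and>
          (\<forall>c u. (\<forall>t. 0 \<le> u$t) \<longrightarrow>
             marginal (F :: (real^'t^'c) measure) c u = FX_star v X Y c u \<and>
             marginal G c u = FY_star v X Y c u)
          \<longrightarrow> equilibrium v X Y F G)"
proof -
  interpret weakest_link_lotto v X Y
    using assms by unfold_locales auto
  show ?thesis
    using payoff_X_of_equilibrium equilibrium_of_marginals
    by (intro conjI exI[of _ strat_X] exI[of _ strat_Y] equilibrium_of_marginals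
        strat_X_in_strategies strat_Y_in_strategies marginals_strat_XY)
      (auto simp: payoff_Y_def \<alpha>_def)
qed

end
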